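(* For any positive semi-definite symmetric matrix $\mathbf{Z}\in\mathbb{R}^{M\times M}$, the constraint $\mathbf{Z}\succeq \boldsymbol{\Phi}\boldsymbol{\Sigma}_0\boldsymbol{\Phi}^T+\beta^{-1}\mathbf{I}$ defines a convex set with respect to the pair of variables $\mathbf{Z}$ and $\left(\sqrt{\boldsymbol{\gamma}}\otimes\sqrt{\boldsymbol{\gamma}}\right)$, for fixed correlation matrices $\mathbf{B}_i$.
   Context: Consider the noisy linear model $\mathbf{y}=\boldsymbol{\Phi}\mathbf{x}+\mathbf{n}$ with $\boldsymbol{\Phi}\in\mathbb{R}^{M\times N}$, $N=gL$, and noise $\mathbf{n}\sim\mathcal{N}(0,\beta^{-1}\mathbf{I})$ with precision $\beta>0$. The signal $\mathbf{x}$ is split into $g$ blocks $\mathbf{x}_i\in\mathbb{R}^{L}$, each with Gaussian prior $\mathcal{N}(\mathbf{0},\mathbf{G}_i\mathbf{B}_i\mathbf{G}_i)$, where $\mathbf{G}_i=\mathrm{diag}\{\sqrt{\gamma_{i1}},\dots,\sqrt{\gamma_{iL}}\}$ with variances $\gamma_{ij}\ge 0$, and $\mathbf{B}_i\in\mathbb{R}^{L\times L}$ is a positive definite intra-block correlation matrix. The prior covariance of $\mathbf{x}$ is $\boldsymbol{\Sigma}_0=\mathrm{diag}\{\mathbf{G}_1\mathbf{B}_1\mathbf{G}_1,\dots,\mathbf{G}_g\mathbf{B}_g\mathbf{G}_g\}=\tilde{\mathbf{G}}\tilde{\mathbf{B}}\tilde{\mathbf{G}}$ with $\tilde{\mathbf{G}}=\mathrm{diag}(\sqrt{\gamma_{11}},\dots,\sqrt{\gamma_{gL}})$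 and $\tilde{\mathbf{B}}=\mathrm{diag}(\mathbf{B}_1,\dots,\mathbf{B}_g)$. Here $\boldsymbol{\gamma}=(\gamma_{11},\dots,\gamma_{gL})^T$, $\sqrt{\boldsymbol{\gamma}}$ is its elementwise square root, and $\otimes$ is the Kronecker product. *)

theory Defs
  imports "HOL-Analysis.Analysis"
begin

definition sym_mat :: "real^'n^'n \<Rightarrow> bool" where
  "sym_mat A \<longleftrightarrow> transpose A = A"

definition psd :: "real^'n^'n \<Rightarrow> bool" where
  "psd A \<longleftrightarrow> sym_mat A \<and> (\<forall>x. 0 \<le> x \<bullet> (A *v x))"

definition pd :: "real^'n^'n \<Rightarrow> bool" where
  "pd A \<longleftrightarrow> sym_mat A \<and> (\<forall>x. x \<noteq> 0 \<longrightarrow> 0 < x \<bullet> (A *v x))"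

definition loewner_ge :: "real^'n^'n \<Rightarrow> real^'n^'n \<Rightarrow> bool" where
  "loewner_ge A C \<longleftrightarrow> psd (A - C)"

text \<open>Signal index set: pairs (i,j), block i, position j in the block (N = g L).
  Block-diagonal B-tilde built from the blocks B i.\<close>
definition Btilde :: "('g::finite \<Rightarrow> real^('l::finite)^'l) \<Rightarrow> real^('g \<times> 'l)^('g \<times> 'l)" where
  "Btilde B = (\<chi> a b. if fst a = fst b then B (fst a) $ snd a $ snd b else 0)"

text \<open>Prior covariance Sigma_0 = G B G, written in terms of the variable
  w = sqrt gamma (x) sqrt gamma, indexed by pairs (a,b) with w(a,b) = sqrt(gamma_a) sqrt(gamma_b):
  (Sigma_0)_{ab} = sqrt(gamma_a) Btilde_{ab} sqrt(gamma_b) = w(a,b) Btilde_{ab}.\<close>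
definition Sigma0_of_w ::
  "('g::finite \<Rightarrow> real^('l::finite)^'l) \<Rightarrow> real^(('g \<times> 'l) \<times> ('g \<times> 'l)) \<Rightarrow> real^('g \<times> 'l)^('g \<times> 'l)" where
  "Sigma0_of_w B w = (\<chi> a b. w $ (a, b) * Btilde B $ a $ b)"

definition kron_sqrt :: "real^('n::finite) \<Rightarrow> real^('n \<times> 'n)" where
  "kron_sqrt \<gamma> = (\<chi> p. sqrt (\<gamma> $ fst p) * sqrt (\<gamma> $ snd p))"

lemma Sigma0_of_kron_sqrt:
  "Sigma0_of_w B (kron_sqrt \<gamma>) =
     (\<chi> a b. sqrt (\<gamma> $ a) * Btilde B $ a $ b * sqrt (\<gamma> $ b))"
  by (simp add: Sigma0_of_w_def kron_sqrt_def vec_eq_iff)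

end

theory Submission
  imports Defs
begin

text \<open>The constraint is a positive semidefiniteness condition on an affine function of
  the pair \<open>(Z, w)\<close>: the prior covariance depends linearly on \<open>w = \<surd>\<gamma> \<otimes> \<surd>\<gamma>\<close>, and so does
  \<open>\<Phi> \<Sigma>\<^sub>0 \<Phi>\<^sup>T\<close>. Positive semidefinite matrices form a convex cone, and preimages of convex
  sets under affine maps are convex.\<close>

lemma psd_add:
  fixes A C :: "real^'n^'n"
  assumes "psd A" "psd C"
  shows "psd (A + C)"
  using assms
  by (simp add: psd_def sym_mat_def transpose_def vec_eq_iff matrix_vector_mult_add_rdistrib
      inner_add_right)

lemma psd_scaleR:
  fixes A :: "real^'n^'n"
  assumes "psd A" "0 \<le> c"
  shows "psd (c *\<^sub>R A)"
  using assms
  by (simp add: psd_def sym_mat_def transpose_scalar scaleR_matrix_vector_assoc[symmetric])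

lemma convex_psd: "convex {A :: real^'n^'n. psd A}"
  by (rule convexI) (simp add: psd_add psd_scaleR)

lemma convex_psd_affine_vimage:
  fixes f :: "'a::real_vector \<Rightarrow> real^'n^'n"
  assumes "linear f"
  shows "convex {x. psd (f x + C)}"
proof -
  have "{x. psd (f x + C)} = f -` ((\<lambda>A. A - C) ` {A. psd A})"
    by (force simp: image_iff)
  then show ?thesis
    by (simp only:) (intro convex_linear_vimage assms convex_translation_subtract convex_psd)
qed

lemma linear_matrix_sandwich:
  fixes P :: "real^'n^'m" and Q :: "real^'k^'p"
  shows "linear (\<lambda>S. P ** S ** Q)"
proof (rule linearI)
  show "P ** (S + T) ** Q = P ** S ** Q + P ** T ** Q" for S T
    by (simp add: matrix_add_ldistrib vec_eq_iff matrix_matrix_mult_def sum.distrib algebra_simps)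
  show "P ** (c *\<^sub>R S) ** Q = c *\<^sub>R (P ** S ** Q)" for c S
    by (simp add: matrix_scalar_ac scalar_matrix_assoc[symmetric])
qed

lemma linear_Sigma0_of_w: "linear (Sigma0_of_w B)"
  by (rule linearI) (simp_all add: Sigma0_of_w_def vec_eq_iff algebra_simps)

theorem lemma1:
  fixes \<Phi> :: "real^('g::finite \<times> 'l::finite)^'m"
    and \<beta> :: real
    and B :: "'g \<Rightarrow> real^'l^'l"
  assumes "\<beta> > 0"
    and "\<And>i. pd (B i)"
  shows "convex {(Z :: real^'m^'m, w :: real^(('g \<times> 'l) \<times> ('g \<times> 'l))).
            psd Z \<and>
            loewner_ge Z (\<Phi> ** Sigma0_of_w B w ** transpose \<Phi> + (1 / \<beta>) *\<^sub>R mat 1)}"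
proof -
  define L where "L p = fst p - \<Phi> ** Sigma0_of_w B (snd p) ** transpose \<Phi>" for p
  define N :: "real^'m^'m" where "N = - ((1 / \<beta>) *\<^sub>R mat 1)"
  have "linear (\<lambda>p. \<Phi> ** Sigma0_of_w B (snd p) ** transpose \<Phi>)"
    using linear_compose[OF linear_compose[OF linear_snd linear_Sigma0_of_w] linear_matrix_sandwich]
    by (simp add: o_def)
  then have "linear L"
    unfolding L_def by (intro linear_compose_sub linear_fst)
  then have "convex ({p. psd (fst p + 0)} \<inter> {p. psd (L p + N)})"
    by (intro convex_Int convex_psd_affine_vimage linear_fst)
  moreover have "{p. psd (fst p + 0)} \<inter> {p. psd (L p + N)} = {(Z, w). psd Z \<and>
      loewner_ge Z (\<Phi> ** Sigma0_of_w B w ** transpose \<Phi> + (1 / \<beta>) *\<^sub>R mat 1)}"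
    by (auto simp: L_def N_def loewner_ge_def algebra_simps)
  ultimately show ?thesis
    by simp
qed

end
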